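(* Let $\mathcal C$ be a clustering problem, and let $P\in\mathcal P(\mathcal X)^K$ with $\tfrac12\ge p_{\min}=\min_{i\in[K]}\min_{a\in\mathcal X}P_i(a)>0$. Let $\epsilon\in(0,p_{\min}/2)$. Then for all $Q\in\mathcal P(\mathcal X)^K$ with $\|P-Q\|_\infty\le\epsilon$, all $w\in\mathrm{int}(\Sigma_K)$ and all $\sigma\in\mathcal C$, $$|g_P^\sigma(w)-g_Q^\sigma(w)|\le E\epsilon,\qquad |G_P^\sigma(w)-G_Q^\sigma(w)|\le E\epsilon,\qquad E=|\mathcal X|\log\frac{2-p_{\min}}{p_{\min}}.$$
   Context: Framework. Let $\mathcal X$ be a finite alphabet with $|\mathcal X|\ge2$, $\mathcal P(\mathcal X)$ the set of probability distributions on $\mathcal X$, and $K\ge2$ an integer (number of arms); $[n]=\{1,\dots,n\}$. A hypothesis is a collection $\sigma=\{\mathcal A_1^\sigma,\dots,\mathcal A_{M_\sigma}^\sigma\}$ ($M_\sigma\ge1$) of pairwise disjoint subsets of $[K]$, each of cardinality at least 2 (clusters). A clustering problem is a finite set $\mathcal C$ of hypotheses with $|\mathcal C|\ge2$. For $P,Q\in\mathcal P(\mathcal X)^K$, $\|P-Q\|_\infty=\max_{i\in[K]}\max_{a\in\mathcal X}|P_i(a)-Q_i(a)|$. Functions. $D(P\|Q)$ is the KL divergence. $\Sigma_K=\{w\in\mathbb R^K: w_i\ge0,\sum_iw_i=1\}$, $\mathrm{int}(\Sigma_K)$ its relative interior (all $w_i>0$). For $\mathcal A\subseteq[K]$, $G(P_{\mathcal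 A},w_{\mathcal A})=0$ if $w_i=0$ for all $i\in\mathcal A$, and otherwise $G(P_{\mathcal A},w_{\mathcal A})=\sum_{i\in\mathcal A}w_iD(P_i\|W)$ with $W=\sum_{i\in\mathcal A}w_iP_i/\sum_{i\in\mathcal A}w_i$. For $\sigma\in\mathcal C$, $g_P^\sigma(w)=\sum_{m=1}^{M_\sigma}G(P_{\mathcal A_m^\sigma},w_{\mathcal A_m^\sigma})$ and $G_P^\sigma(w)=\min_{\sigma'\in\mathcal C\setminus\{\sigma\}}g_P^{\sigma'}(w)$. *)

theory Defs
  imports "HOL-Analysis.Analysis"
begin

text \<open>A distribution on 'x is a function 'x => real, nonnegative, summing to 1.
  A vector of K distributions is a function nat => 'x => real (only arms in {1..K} matter).\<close>

definition is_dist :: "('x::finite \<Rightarrow> real) \<Rightarrow> bool" where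
  "is_dist p \<longleftrightarrow> (\<forall>a. p a \<ge> 0) \<and> (\<Sum>a\<in>UNIV. p a) = 1"

definition is_dist_vec :: "nat \<Rightarrow> (nat \<Rightarrow> 'x::finite \<Rightarrow> real) \<Rightarrow> bool" where
  "is_dist_vec K P \<longleftrightarrow> (\<forall>i\<in>{1..K}. is_dist (P i))"

definition KL :: "('x::finite \<Rightarrow> real) \<Rightarrow> ('x \<Rightarrow> real) \<Rightarrow> real" where
  "KL p q = (\<Sum>a\<in>UNIV. if p a = 0 then 0 else p a * ln (p a / q a))"

definition sup_dist :: "nat \<Rightarrow> (nat \<Rightarrow> 'x::finite \<Rightarrow> real) \<Rightarrow> (nat \<Rightarrow> 'x \<Rightarrow> real) \<Rightarrow> real" where
  "sup_dist K P Q = Max {\<bar>P i a - Q i a\<bar> | i a. i \<in> {1..K}}"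

definition p_min :: "nat \<Rightarrow> (nat \<Rightarrow> 'x::finite \<Rightarrow> real) \<Rightarrow> real" where
  "p_min K P = Min {P i a | i a. i \<in> {1..K}}"

definition int_simplex :: "nat \<Rightarrow> (nat \<Rightarrow> real) \<Rightarrow> bool" where
  "int_simplex K w \<longleftrightarrow> (\<forall>i\<in>{1..K}. w i > 0) \<and> (\<Sum>i\<in>{1..K}. w i) = 1"

definition is_hypothesis :: "nat \<Rightarrow> nat set set \<Rightarrow> bool" where
  "is_hypothesis K \<sigma> \<longleftrightarrow> \<sigma> \<noteq> {} \<and>
     (\<forall>A\<in>\<sigma>. A \<subseteq> {1..K} \<and> card A \<ge> 2) \<and>
     (\<forall>A\<in>\<sigma>. \<forall>B\<in>\<sigma>. A \<noteq> B \<longrightarrow> A \<inter> B = {})"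

definition clustering_problem :: "nat \<Rightarrow> nat set set set \<Rightarrow> bool" where
  "clustering_problem K C \<longleftrightarrow> finite C \<and> card C \<ge> 2 \<and> (\<forall>\<sigma>\<in>C. is_hypothesis K \<sigma>)"

definition Gclust :: "(nat \<Rightarrow> 'x::finite \<Rightarrow> real) \<Rightarrow> (nat \<Rightarrow> real) \<Rightarrow> nat set \<Rightarrow> real" where
  "Gclust P w A =
     (if (\<forall>i\<in>A. w i = 0) then 0
      else (let W = (\<lambda>a. (\<Sum>i\<in>A. w i * P i a) / (\<Sum>i\<in>A. w i))
            in (\<Sum>i\<in>A. w i * KL (P i) W)))"

definition g_hyp :: "(nat \<Rightarrow> 'x::finite \<Rightarrow> real) \<Rightarrow> nat set set \<Rightarrow> (nat \<Rightarrow> real) \<Rightarrow> real" where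
  "g_hyp P \<sigma> w = (\<Sum>A\<in>\<sigma>. Gclust P w A)"

definition G_hyp :: "nat set set set \<Rightarrow> (nat \<Rightarrow> 'x::finite \<Rightarrow> real) \<Rightarrow> nat set set \<Rightarrow> (nat \<Rightarrow> real) \<Rightarrow> real" where
  "G_hyp C P \<sigma> w = Min ((\<lambda>\<sigma>'. g_hyp P \<sigma>' w) ` (C - {\<sigma>}))"

end

theory Submission
  imports Defs
begin

text \<open>With \<open>p = p_min K P\<close>, every entry of \<open>P\<close> lies in \<open>[p, 1 - p]\<close>, so the entries of \<open>P\<close>, of \<open>Q\<close>
  and of their weighted mixtures lie in the band \<open>[p/2, 1 - p/2]\<close>. A cluster term equals
  \<open>\<Sum> w\<^sub>i H(P\<^sub>i) - (\<Sum> w\<^sub>i) H(W)\<close> with \<open>H(u) = \<Sum>\<^sub>a u\<^sub>a ln u\<^sub>a\<close> and \<open>W\<close> the mixture, and on the band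
  \<open>H\<close> is Lipschitz in the sup norm with constant \<open>|X| ln((2 - p)/p) / 2\<close>. Summing over disjoint
  clusters costs total weight at most 1, and the minimum over the other hypotheses is
  1-Lipschitz.\<close>

lemma xlnx_shift_diff_le:
  fixes lo hi c x y :: real
  assumes "0 < lo" "c = (ln lo + ln hi) / 2" "x \<in> {lo..hi}" "y \<in> {lo..hi}"
  shows "\<bar>(x * ln x - (1 + c) * x) - (y * ln y - (1 + c) * y)\<bar> \<le> (ln hi - ln lo) / 2 * \<bar>x - y\<bar>"
proof -
  have "norm ((\<lambda>t. t * ln t - (1 + c) * t) x - (\<lambda>t. t * ln t - (1 + c) * t) y)
        \<le> (ln hi - ln lo) / 2 * norm (x - y)"
  proof (rule field_differentiable_bound[where S = "{lo..hi}"])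
    fix z assume z: "z \<in> {lo..hi}"
    then show "((\<lambda>t. t * ln t - (1 + c) * t) has_field_derivative ln z - c) (at z within {lo..hi})"
      using assms(1) by (auto intro!: derivative_eq_intros)
    have "ln lo \<le> ln z" "ln z \<le> ln hi" using z assms(1) by auto
    then show "norm (ln z - c) \<le> (ln hi - ln lo) / 2"
      unfolding real_norm_def abs_le_iff using assms(2) by (auto simp: field_simps)
  qed (use assms in auto)
  then show ?thesis by simp
qed

definition neg_entropy :: "('x::finite \<Rightarrow> real) \<Rightarrow> real" where
  "neg_entropy u = (\<Sum>a\<in>UNIV. u a * ln (u a))"

text \<open>Since both arguments sum to 1, adding the linear term \<open>-(1 + c) x\<close> to \<open>x ln x\<close> does not
  change the difference; with \<open>c\<close> the midpoint of \<open>ln\<close> on \<open>[lo, hi]\<close> this halves the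
  Lipschitz constant.\<close>
lemma neg_entropy_diff_le:
  fixes u v :: "'x::finite \<Rightarrow> real"
  assumes "0 < lo" "sum u UNIV = 1" "sum v UNIV = 1"
    and "\<And>a. u a \<in> {lo..hi}" "\<And>a. v a \<in> {lo..hi}" "\<And>a. \<bar>u a - v a\<bar> \<le> \<epsilon>"
  shows "\<bar>neg_entropy u - neg_entropy v\<bar> \<le> real CARD('x) * ((ln hi - ln lo) / 2 * \<epsilon>)"
proof -
  define c where "c = (ln lo + ln hi) / 2"
  define \<phi> where "\<phi> x = x * ln x - (1 + c) * x" for x :: real
  have "neg_entropy u - neg_entropy v
      = (\<Sum>a\<in>UNIV. \<phi> (u a) - \<phi> (v a)) + (1 + c) * (sum u UNIV - sum v UNIV)"
    by (simp add: neg_entropy_def \<phi>_def sum_subtractf sum.distrib sum_distrib_left algebra_simps)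
  also have "\<dots> = (\<Sum>a\<in>UNIV. \<phi> (u a) - \<phi> (v a))"
    using assms(2,3) by simp
  finally have "\<bar>neg_entropy u - neg_entropy v\<bar> \<le> (\<Sum>a\<in>UNIV. \<bar>\<phi> (u a) - \<phi> (v a)\<bar>)"
    by (simp add: sum_abs)
  also have "\<dots> \<le> (\<Sum>a\<in>(UNIV::'x set). (ln hi - ln lo) / 2 * \<epsilon>)"
  proof (rule sum_mono)
    fix a
    have "ln lo \<le> ln hi" using assms(1) assms(4)[of a] by auto
    then have "(ln hi - ln lo) / 2 * \<bar>u a - v a\<bar> \<le> (ln hi - ln lo) / 2 * \<epsilon>"
      using assms(6) by (intro mult_left_mono) auto
    then show "\<bar>\<phi> (u a) - \<phi> (v a)\<bar> \<le> (ln hi - ln lo) / 2 * \<epsilon>"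
      unfolding \<phi>_def using xlnx_shift_diff_le[OF assms(1) c_def assms(4,5)] by (rule order_trans[rotated])
  qed
  finally show ?thesis by simp
qed

definition mixture :: "(nat \<Rightarrow> 'x \<Rightarrow> real) \<Rightarrow> (nat \<Rightarrow> real) \<Rightarrow> nat set \<Rightarrow> 'x \<Rightarrow> real" where
  "mixture P w A a = (\<Sum>i\<in>A. w i * P i a) / (\<Sum>i\<in>A. w i)"

locale positive_weights =
  fixes A :: "nat set" and w :: "nat \<Rightarrow> real"
  assumes finite: "finite A" and nonempty: "A \<noteq> {}" and pos: "\<And>i. i \<in> A \<Longrightarrow> w i > 0"
begin

lemma weight_sum_pos: "(\<Sum>i\<in>A. w i) > 0"
  using finite nonempty pos by (intro sum_pos) auto

lemma sum_mixture:
  fixes P :: "nat \<Rightarrow> 'x::finite \<Rightarrow> real"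
  assumes "\<And>i. i \<in> A \<Longrightarrow> sum (P i) UNIV = 1"
  shows "sum (mixture P w A) UNIV = 1"
proof -
  have "sum (mixture P w A) UNIV = (\<Sum>i\<in>A. w i * sum (P i) UNIV) / (\<Sum>i\<in>A. w i)"
    by (simp add: mixture_def sum_divide_distrib[symmetric] sum.swap[of _ A] sum_distrib_left)
  then show ?thesis using assms weight_sum_pos by simp
qed

lemma mixture_in_interval:
  assumes "\<And>i. i \<in> A \<Longrightarrow> P i a \<in> {lo..hi}"
  shows "mixture P w A a \<in> {lo..hi}"
proof -
  have "lo * (\<Sum>i\<in>A. w i) \<le> (\<Sum>i\<in>A. w i * P i a)" "(\<Sum>i\<in>A. w i * P i a) \<le> hi * (\<Sum>i\<in>A. w i)"
    using assms pos unfolding sum_distrib_left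
    by (auto intro!: sum_mono simp: mult.commute[of _ "w _"] less_imp_le)
  then show ?thesis
    using weight_sum_pos by (simp add: mixture_def field_simps)
qed

lemma mixture_diff_le:
  assumes "\<And>i. i \<in> A \<Longrightarrow> \<bar>P i a - Q i a\<bar> \<le> \<epsilon>"
  shows "\<bar>mixture P w A a - mixture Q w A a\<bar> \<le> \<epsilon>"
proof -
  have "\<bar>\<Sum>i\<in>A. w i * (P i a - Q i a)\<bar> \<le> \<epsilon> * (\<Sum>i\<in>A. w i)"
    using assms pos unfolding sum_distrib_left
    by (intro order_trans[OF sum_abs] sum_mono) (auto simp: abs_mult abs_of_pos mult.commute[of \<epsilon>])
  then show ?thesis
    using weight_sum_pos
    by (simp add: mixture_def abs_divide field_simps sum_subtractf right_diff_distrib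
        flip: diff_divide_distrib)
qed

lemma Gclust_eq_neg_entropy:
  assumes "\<And>i a. i \<in> A \<Longrightarrow> P i a > 0"
  shows "Gclust P w A
    = (\<Sum>i\<in>A. w i * neg_entropy (P i)) - (\<Sum>i\<in>A. w i) * neg_entropy (mixture P w A)"
proof -
  define W where "W = mixture P w A"
  have W_pos: "W a > 0" for a
    using assms pos weight_sum_pos
    by (auto simp: W_def mixture_def intro!: divide_pos_pos sum_pos finite nonempty)
  have KL_eq: "KL (P i) W = neg_entropy (P i) - (\<Sum>a\<in>UNIV. P i a * ln (W a))" if "i \<in> A" for i
  proof -
    have "P i a \<noteq> 0" "W a \<noteq> 0" for a using assms[OF that, of a] W_pos[of a] by simp_all
    then show ?thesis
      using assms[OF that] W_pos
      by (simp add: KL_def neg_entropy_def ln_div right_diff_distrib sum_subtractf)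
  qed
  have cross: "(\<Sum>i\<in>A. w i * (\<Sum>a\<in>UNIV. P i a * ln (W a))) = (\<Sum>i\<in>A. w i) * neg_entropy W"
  proof -
    have "(\<Sum>i\<in>A. w i * (\<Sum>a\<in>UNIV. P i a * ln (W a))) = (\<Sum>a\<in>UNIV. (\<Sum>i\<in>A. w i * P i a) * ln (W a))"
      by (simp add: sum_distrib_left sum_distrib_right sum.swap[of _ A] mult.assoc)
    also have "\<dots> = (\<Sum>a\<in>UNIV. (\<Sum>i\<in>A. w i) * (W a * ln (W a)))"
      using weight_sum_pos by (simp add: W_def mixture_def)
    finally show ?thesis by (simp add: neg_entropy_def sum_distrib_left)
  qed
  have "\<not> (\<forall>i\<in>A. w i = 0)" using nonempty pos by fastforce
  then have "Gclust P w A = (\<Sum>i\<in>A. w i * KL (P i) W)"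
    by (simp add: Gclust_def W_def mixture_def[abs_def])
  also have "\<dots> = (\<Sum>i\<in>A. w i * neg_entropy (P i)) - (\<Sum>i\<in>A. w i * (\<Sum>a\<in>UNIV. P i a * ln (W a)))"
    using KL_eq by (simp add: right_diff_distrib sum_subtractf)
  finally show ?thesis using cross by (simp add: W_def)
qed

text \<open>Both the per-arm terms and the mixture term of \<open>Gclust\<close> move by at most half the final
  bound, since mixing preserves the band \<open>[lo, hi]\<close> and the distance \<open>\<epsilon>\<close>.\<close>
lemma Gclust_diff_le:
  fixes P Q :: "nat \<Rightarrow> 'x::finite \<Rightarrow> real"
  assumes "0 < lo"
    and "\<And>i. i \<in> A \<Longrightarrow> sum (P i) UNIV = 1" "\<And>i. i \<in> A \<Longrightarrow> sum (Q i) UNIV = 1"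
    and "\<And>i a. i \<in> A \<Longrightarrow> P i a \<in> {lo..hi}" "\<And>i a. i \<in> A \<Longrightarrow> Q i a \<in> {lo..hi}"
    and "\<And>i a. i \<in> A \<Longrightarrow> \<bar>P i a - Q i a\<bar> \<le> \<epsilon>"
  shows "\<bar>Gclust P w A - Gclust Q w A\<bar> \<le> (\<Sum>i\<in>A. w i) * (real CARD('x) * (ln hi - ln lo) * \<epsilon>)"
proof -
  define s where "s = (\<Sum>i\<in>A. w i)"
  define B where "B = real CARD('x) * ((ln hi - ln lo) / 2 * \<epsilon>)"
  have arm: "\<bar>neg_entropy (P i) - neg_entropy (Q i)\<bar> \<le> B" if "i \<in> A" for i
    unfolding B_def using assms that by (intro neg_entropy_diff_le) auto
  have mix: "\<bar>neg_entropy (mixture P w A) - neg_entropy (mixture Q w A)\<bar> \<le> B"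
    unfolding B_def using assms
    by (intro neg_entropy_diff_le sum_mixture mixture_in_interval mixture_diff_le) auto
  have "Gclust P w A - Gclust Q w A
      = (\<Sum>i\<in>A. w i * (neg_entropy (P i) - neg_entropy (Q i)))
        - s * (neg_entropy (mixture P w A) - neg_entropy (mixture Q w A))"
  proof -
    have "\<And>i a. i \<in> A \<Longrightarrow> P i a > 0" "\<And>i a. i \<in> A \<Longrightarrow> Q i a > 0"
      using assms(1,4,5) by (meson atLeastAtMost_iff less_le_trans)+
    then show ?thesis
      by (simp add: Gclust_eq_neg_entropy s_def right_diff_distrib sum_subtractf)
  qed
  also have "\<bar>\<dots>\<bar> \<le> (\<Sum>i\<in>A. w i * B) + s * B"
    using arm mix pos weight_sum_pos unfolding s_def
    by (intro order_trans[OF abs_triangle_ineq4] add_mono order_trans[OF sum_abs] sum_mono)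
      (auto simp: abs_mult abs_of_pos intro!: mult_left_mono)
  also have "\<dots> = 2 * s * B"
    by (simp add: s_def sum_distrib_right)
  also have "\<dots> = s * (real CARD('x) * (ln hi - ln lo) * \<epsilon>)"
    by (simp add: B_def)
  finally show ?thesis unfolding s_def .
qed

end

lemma g_hyp_diff_le:
  assumes "is_hypothesis K \<sigma>" "\<And>i. i \<in> {1..K} \<Longrightarrow> w i \<ge> 0" "E \<ge> 0"
    and "\<And>A. A \<in> \<sigma> \<Longrightarrow> \<bar>Gclust P w A - Gclust Q w A\<bar> \<le> (\<Sum>i\<in>A. w i) * E"
  shows "\<bar>g_hyp P \<sigma> w - g_hyp Q \<sigma> w\<bar> \<le> (\<Sum>i\<in>{1..K}. w i) * E"
proof -
  have sub: "\<And>A. A \<in> \<sigma> \<Longrightarrow> A \<subseteq> {1..K}"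
    and disj: "\<forall>A\<in>\<sigma>. \<forall>B\<in>\<sigma>. A \<noteq> B \<longrightarrow> A \<inter> B = {}"
    using assms(1) unfolding is_hypothesis_def by auto
  have fin: "finite \<sigma>" "\<And>A. A \<in> \<sigma> \<Longrightarrow> finite A"
    using sub finite_subset[of \<sigma> "Pow {1..K}"] finite_subset by blast+
  have "\<bar>g_hyp P \<sigma> w - g_hyp Q \<sigma> w\<bar> \<le> (\<Sum>A\<in>\<sigma>. \<bar>Gclust P w A - Gclust Q w A\<bar>)"
    unfolding g_hyp_def sum_subtractf[symmetric] by (rule sum_abs)
  also have "\<dots> \<le> (\<Sum>A\<in>\<sigma>. (\<Sum>i\<in>A. w i) * E)"
    by (intro sum_mono assms(4))
  also have "\<dots> = (\<Sum>A\<in>\<sigma>. \<Sum>i\<in>A. w i) * E"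
    by (rule sum_distrib_right[symmetric])
  also have "(\<Sum>A\<in>\<sigma>. \<Sum>i\<in>A. w i) = (\<Sum>i\<in>\<Union>\<sigma>. w i)"
    using fin disj by (simp add: sum.Union_disjoint)
  also have "(\<Sum>i\<in>\<Union>\<sigma>. w i) * E \<le> (\<Sum>i\<in>{1..K}. w i) * E"
    using sub assms(2,3) by (intro mult_right_mono sum_mono2) auto
  finally show ?thesis .
qed

lemma Min_image_diff_le:
  fixes f g :: "'a \<Rightarrow> real"
  assumes "finite S" "S \<noteq> {}" "\<And>x. x \<in> S \<Longrightarrow> \<bar>f x - g x\<bar> \<le> B"
  shows "\<bar>Min (f ` S) - Min (g ` S)\<bar> \<le> B"
proof -
  have "Min (f ` S) \<in> f ` S" "Min (g ` S) \<in> g ` S"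
    using assms(1,2) by (intro Min_in; simp)+
  then obtain x y where x: "x \<in> S" "Min (f ` S) = f x" and y: "y \<in> S" "Min (g ` S) = g y"
    by blast
  have "Min (f ` S) \<le> f y" "Min (g ` S) \<le> g x"
    using assms(1) x(1) y(1) by simp_all
  then show ?thesis
    using assms(3)[OF x(1)] assms(3)[OF y(1)] x y by (simp add: abs_le_iff)
qed

lemma G_hyp_diff_le:
  assumes "clustering_problem K C" "\<sigma> \<in> C"
    and "\<And>\<sigma>'. \<sigma>' \<in> C \<Longrightarrow> \<bar>g_hyp P \<sigma>' w - g_hyp Q \<sigma>' w\<bar> \<le> E"
  shows "\<bar>G_hyp C P \<sigma> w - G_hyp C Q \<sigma> w\<bar> \<le> E"
proof -
  have "finite C" "card C \<ge> 2" using assms(1) unfolding clustering_problem_def by auto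
  then have "C - {\<sigma>} \<noteq> {}"
    using card_mono[of "{\<sigma>}" C] by force
  then show ?thesis
    unfolding G_hyp_def using \<open>finite C\<close> assms(3) by (intro Min_image_diff_le) auto
qed

lemma is_dist_le_one_minus:
  fixes p :: "'x::finite \<Rightarrow> real"
  assumes "is_dist p" "CARD('x) \<ge> 2" "\<And>b. m \<le> p b"
  shows "p a \<le> 1 - m"
proof -
  have "\<not> UNIV \<subseteq> {a}"
    using assms(2) card_mono[of "{a}" UNIV] by fastforce
  then obtain b where "b \<noteq> a" by blast
  then have "p a + p b \<le> sum p UNIV"
    using assms(1) sum_mono2[of UNIV "{a, b}" p] unfolding is_dist_def by auto
  then show ?thesis
    using assms(1) assms(3)[of b] unfolding is_dist_def by linarith
qed

lemma p_min_le:
  assumes "i \<in> {1..K}"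
  shows "p_min K P \<le> P i a"
proof -
  have "{P i a | i a. i \<in> {1..K}} = (\<lambda>(i, a). P i a) ` ({1..K} \<times> UNIV)" by auto
  then show ?thesis
    unfolding p_min_def using assms by (intro Min_le) auto
qed

lemma abs_diff_le_sup_dist:
  assumes "i \<in> {1..K}"
  shows "\<bar>P i a - Q i a\<bar> \<le> sup_dist K P Q"
proof -
  have "{\<bar>P i a - Q i a\<bar> | i a. i \<in> {1..K}} = (\<lambda>(i, a). \<bar>P i a - Q i a\<bar>) ` ({1..K} \<times> UNIV)"
    by auto
  then show ?thesis
    unfolding sup_dist_def using assms by (intro Max_ge) auto
qed

lemma p_min_band:
  fixes P Q :: "nat \<Rightarrow> 'x::finite \<Rightarrow> real"
  assumes "CARD('x) \<ge> 2" "is_dist_vec K P" "sup_dist K P Q \<le> \<epsilon>" "\<epsilon> < p_min K P / 2"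
    and "i \<in> {1..K}"
  shows "P i a \<in> {p_min K P / 2..1 - p_min K P / 2}" "Q i a \<in> {p_min K P / 2..1 - p_min K P / 2}"
    and "\<bar>P i a - Q i a\<bar> \<le> \<epsilon>"
proof -
  have "p_min K P \<le> P i a" "P i a \<le> 1 - p_min K P" "\<bar>P i a - Q i a\<bar> \<le> \<epsilon>"
    using assms p_min_le[OF assms(5)] abs_diff_le_sup_dist[OF assms(5), of P a Q]
    by (auto simp: is_dist_vec_def intro!: is_dist_le_one_minus)
  then show "P i a \<in> {p_min K P / 2..1 - p_min K P / 2}" "Q i a \<in> {p_min K P / 2..1 - p_min K P / 2}"
    and "\<bar>P i a - Q i a\<bar> \<le> \<epsilon>"
    using assms(4) by (auto simp: abs_le_iff)
qed

lemma g_hyp_perturb_le: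
  fixes P Q :: "nat \<Rightarrow> 'x::finite \<Rightarrow> real"
  assumes "is_hypothesis K \<sigma>" "int_simplex K w" "is_dist_vec K P" "is_dist_vec K Q"
    and "0 < lo" "lo \<le> hi" "0 \<le> \<epsilon>"
    and "\<And>i a. i \<in> {1..K} \<Longrightarrow> P i a \<in> {lo..hi}" "\<And>i a. i \<in> {1..K} \<Longrightarrow> Q i a \<in> {lo..hi}"
    and "\<And>i a. i \<in> {1..K} \<Longrightarrow> \<bar>P i a - Q i a\<bar> \<le> \<epsilon>"
  shows "\<bar>g_hyp P \<sigma> w - g_hyp Q \<sigma> w\<bar> \<le> real CARD('x) * (ln hi - ln lo) * \<epsilon>"
proof -
  have cluster: "\<bar>Gclust P w A - Gclust Q w A\<bar> \<le> (\<Sum>i\<in>A. w i) * (real CARD('x) * (ln hi - ln lo) * \<epsilon>)"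
    if "A \<in> \<sigma>" for A
  proof -
    have A: "A \<subseteq> {1..K}" "2 \<le> card A"
      using that assms(1) by (auto simp: is_hypothesis_def)
    then interpret positive_weights A w
      using assms(2) by unfold_locales (auto simp: int_simplex_def card_ge_0_finite)
    show ?thesis
      using A(1) assms(3-10) by (intro Gclust_diff_le) (auto simp: is_dist_vec_def is_dist_def)
  qed
  have "real CARD('x) * (ln hi - ln lo) * \<epsilon> \<ge> 0"
    using assms(5-7) by simp
  then show ?thesis
    using g_hyp_diff_le[OF assms(1) _ _ cluster] assms(2) by (simp add: int_simplex_def less_imp_le)
qed

theorem lemma6:
  fixes K :: nat and C :: "nat set set set"
    and P :: "nat \<Rightarrow> 'x::finite \<Rightarrow> real" and \<epsilon> :: real
  assumes "CARD('x) \<ge> 2" and "K \<ge> 2"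
    and "clustering_problem K C"
    and "is_dist_vec K P"
    and "p_min K P > 0" and "p_min K P \<le> 1/2"
    and "0 < \<epsilon>" and "\<epsilon> < p_min K P / 2"
  shows "\<forall>Q w \<sigma>. is_dist_vec K Q \<and> sup_dist K P Q \<le> \<epsilon> \<and> int_simplex K w \<and> \<sigma> \<in> C \<longrightarrow>
           \<bar>g_hyp P \<sigma> w - g_hyp Q \<sigma> w\<bar> \<le> real CARD('x) * ln ((2 - p_min K P) / p_min K P) * \<epsilon> \<and>
           \<bar>G_hyp C P \<sigma> w - G_hyp C Q \<sigma> w\<bar> \<le> real CARD('x) * ln ((2 - p_min K P) / p_min K P) * \<epsilon>"
proof (intro allI impI)
  fix Q w \<sigma>
  assume "is_dist_vec K Q \<and> sup_dist K P Q \<le> \<epsilon> \<and> int_simplex K w \<and> \<sigma> \<in> C"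
  then have Q: "is_dist_vec K Q" "sup_dist K P Q \<le> \<epsilon>" and w: "int_simplex K w" and "\<sigma> \<in> C"
    by auto
  define p where "p = p_min K P"
  have "ln (1 - p/2) - ln (p/2) = ln ((1 - p/2) / (p/2))"
    using assms(5,6) by (intro ln_divide_pos[symmetric]) (auto simp: p_def)
  also have "(1 - p/2) / (p/2) = (2 - p) / p"
    using assms(5) by (simp add: p_def field_simps)
  finally have ln_band: "ln (1 - p/2) - ln (p/2) = ln ((2 - p) / p)" .
  have g: "\<bar>g_hyp P \<sigma>' w - g_hyp Q \<sigma>' w\<bar> \<le> real CARD('x) * ln ((2 - p) / p) * \<epsilon>"
    if "\<sigma>' \<in> C" for \<sigma>'
    unfolding ln_band[symmetric] using that assms(3-7) Q w p_min_band[OF assms(1,4) Q(2) assms(8)]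
    by (intro g_hyp_perturb_le) (auto simp: p_def clustering_problem_def)
  show "\<bar>g_hyp P \<sigma> w - g_hyp Q \<sigma> w\<bar> \<le> real CARD('x) * ln ((2 - p_min K P) / p_min K P) * \<epsilon> \<and>
      \<bar>G_hyp C P \<sigma> w - G_hyp C Q \<sigma> w\<bar> \<le> real CARD('x) * ln ((2 - p_min K P) / p_min K P) * \<epsilon>"
    using g[OF \<open>\<sigma> \<in> C\<close>] G_hyp_diff_le[OF assms(3) \<open>\<sigma> \<in> C\<close> g] by (simp add: p_def)
qed

end
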